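(* Let $\lambda=[8,8,8,8,4,4,4,4]$ and $\mu=[16,\underbrace{2,\ldots,2}_{16},\underbrace{1,\ldots,1}_{16}]$. Then $\|\lambda\|_p\le\|\mu\|_p$ for all $p\in[1,\infty]$ (so $\lambda$ bulk-embeds into $\mu$), with equality at $p=\ln(1+\sqrt5)/\ln 2>1$; consequently $\lambda$ does not stably embed into $\mu$. Moreover $\lambda\not\preccurlyeq_S\mu$.
   Context: Partitions are finite nonincreasing sequences of positive integers. For $p\in[1,\infty)$, $\|\lambda\|_p=(\sum_i\lambda_i^p)^{1/p}$ and $\|\lambda\|_\infty=\max_i\lambda_i$. The product $\lambda\times\nu$ is the partition of all products $\lambda_i\nu_j$, reordered nonincreasingly. $\lambda=[\lambda_1,\ldots,\lambda_m]$ embeds into $\mu=[\mu_1,\ldots,\mu_n]$ if there is a map $\varphi:\{1,\ldots,m\}\to\{1,\ldots,n\}$ with $\sum_{i\in\varphi^{-1}(j)}\lambda_i\le\mu_j$ for all $j$; $\lambda$ stably embeds into $\mu$ if $\lambda\times\nu$ embeds into $\mu\times\nu$ for some partition $\nu$. $\lambda$ bulk-embeds into $\mu$ if for every rational $\epsilon>0$ there is $N$ with $\lambda^{\times N}$ embedding into $\mu^{\times N(1+\epsilon)}$ (equivalently $\|\lambda\|_p\le\|\mu\|_p$ for all $p\in[1,\infty]$). $\lambda\preccurlyeq_S\mu$ means: for every $x\in\mathbb N$, $\sum_{\lambda_i\ge x}\lambda_i\le\sum_{\mu_j\ge x}\mu_j$. *)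

theory Defs
  imports Complex_Main
begin

definition is_partition :: "nat list \<Rightarrow> bool" where
  "is_partition l \<longleftrightarrow> sorted_wrt (\<ge>) l \<and> (\<forall>x\<in>set l. 0 < x)"

definition pnorm :: "real \<Rightarrow> nat list \<Rightarrow> real" where
  "pnorm p l = (\<Sum>x\<leftarrow>l. real x powr p) powr (1 / p)"

definition infnorm :: "nat list \<Rightarrow> nat" where
  "infnorm l = (if l = [] then 0 else Max (set l))"

definition ptimes :: "nat list \<Rightarrow> nat list \<Rightarrow> nat list" where
  "ptimes l n = rev (sort [a * b. a \<leftarrow> l, b \<leftarrow> n])"

definition embeds :: "nat list \<Rightarrow> nat list \<Rightarrow> bool" where
  "embeds l m \<longleftrightarrow> (\<exists>\<phi>. (\<forall>i<length l. \<phi> i < length m) \<and>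
     (\<forall>j<length m. (\<Sum>i\<in>{i. i < length l \<and> \<phi> i = j}. l ! i) \<le> m ! j))"

definition stably_embeds :: "nat list \<Rightarrow> nat list \<Rightarrow> bool" where
  "stably_embeds l m \<longleftrightarrow>
     (\<exists>n. is_partition n \<and> n \<noteq> [] \<and> embeds (ptimes l n) (ptimes m n))"

definition S_le :: "nat list \<Rightarrow> nat list \<Rightarrow> bool" where
  "S_le l m \<longleftrightarrow> (\<forall>x::nat. sum_list (filter (\<lambda>a. x \<le> a) l) \<le> sum_list (filter (\<lambda>a. x \<le> a) m))"

end

theory Submission
  imports Defs "HOL-Library.Multiset"
begin

text \<open>
  With \<open>t = 2 powr p\<close> one has \<open>\<Sum>\<mu>\<^sub>i\<^sup>p - \<Sum>\<lambda>\<^sub>i\<^sup>p = t\<^sup>4 + 16t + 16 - 4t\<^sup>3 - 4t\<^sup>2 = (t\<^sup>2 - 2t - 4)\<^sup>2\<close>,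
  which is nonnegative and vanishes exactly at \<open>t = 1 + sqrt 5\<close>. The power sum
  \<open>\<Sum>x\<^sub>i\<^sup>p\<close> is multiplicative under the product of partitions, and for \<open>p \<ge> 1\<close> it
  can only grow along an embedding, strictly so if some part of the target stays
  unused. As \<open>\<lambda> \<times> \<nu>\<close> has fewer parts than \<open>\<mu> \<times> \<nu>\<close>, a stable embedding would make
  the power sums differ at every \<open>p \<ge> 1\<close>, contradicting equality at \<open>t = 1 + sqrt 5\<close>.
  Finally, the parts of size at least 4 sum to 48 in \<open>\<lambda>\<close> but to 16 in \<open>\<mu>\<close>.
\<close>

definition power_sum :: "real \<Rightarrow> nat list \<Rightarrow> real" where
  "power_sum p l = (\<Sum>x\<leftarrow>l. real x powr p)"

lemma pnorm_eq_power_sum_powr: "pnorm p l = power_sum p l powr (1 / p)"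
  unfolding pnorm_def power_sum_def ..

lemma power_sum_nonneg: "0 \<le> power_sum p l"
  unfolding power_sum_def by (induction l) auto

lemma power_sum_mset_cong: "mset xs = mset ys \<Longrightarrow> power_sum p xs = power_sum p ys"
  unfolding power_sum_def by (metis mset_map sum_mset_sum_list)

lemma power_sum_concat_mult:
  "power_sum p (concat (map (\<lambda>a. map (\<lambda>b. a * b) n) l)) = power_sum p l * power_sum p n"
proof (induction l)
  case Nil
  then show ?case by (simp add: power_sum_def)
next
  case (Cons a l)
  have "power_sum p (map (\<lambda>b. a * b) n) = real a powr p * power_sum p n"
    unfolding power_sum_def by (induction n) (simp_all add: powr_mult distrib_left)
  then show ?case using Cons by (simp add: power_sum_def distrib_right)
qed

lemma power_sum_ptimes: "power_sum p (ptimes l n) = power_sum p l * power_sum p n"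
  unfolding ptimes_def
  by (subst power_sum_mset_cong[of _ "concat (map (\<lambda>a. map (\<lambda>b. a * b) n) l)"])
     (simp_all add: power_sum_concat_mult)

lemma length_ptimes: "length (ptimes l n) = length l * length n"
  unfolding ptimes_def by (induction l) simp_all

lemma ptimes_pos:
  assumes "\<forall>x\<in>set l. 0 < x" "\<forall>x\<in>set n. 0 < x"
  shows "\<forall>x\<in>set (ptimes l n). 0 < x"
  using assms unfolding ptimes_def by auto

lemma powr_add_le_powr_add:
  fixes a b p :: real
  assumes "0 \<le> a" "0 \<le> b" "1 \<le> p"
  shows "a powr p + b powr p \<le> (a + b) powr p"
proof (cases "a + b = 0")
  case True
  then have "a = 0" "b = 0" using assms by auto
  then show ?thesis by simp
next
  case False
  then have s: "0 < a + b" using assms by simp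
  have share: "x powr p \<le> x / (a + b) * (a + b) powr p" if "0 \<le> x" "x \<le> a + b" for x
  proof -
    have "x powr p = (x / (a + b)) powr p * (a + b) powr p"
      using that s by (simp add: powr_divide)
    also have "\<dots> \<le> (x / (a + b)) powr 1 * (a + b) powr p"
      using that s assms by (intro mult_right_mono powr_mono') auto
    finally show ?thesis using that s by simp
  qed
  have "a / (a + b) * (a + b) powr p + b / (a + b) * (a + b) powr p = (a + b) powr p"
    using s by (simp add: add_divide_distrib[symmetric] ring_distribs(2)[symmetric])
  then show ?thesis using share[of a] share[of b] assms by linarith
qed

lemma sum_powr_le_powr_sum:
  fixes g :: "'a \<Rightarrow> real"
  assumes "finite A" "\<And>x. x \<in> A \<Longrightarrow> 0 \<le> g x" "1 \<le> p"
  shows "(\<Sum>x\<in>A. g x powr p) \<le> (\<Sum>x\<in>A. g x) powr p"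
  using assms
proof (induction A rule: finite_induct)
  case empty
  then show ?case by simp
next
  case (insert x A)
  have "(\<Sum>x\<in>insert x A. g x powr p) \<le> g x powr p + (\<Sum>x\<in>A. g x) powr p"
    using insert by simp
  also have "\<dots> \<le> (g x + (\<Sum>x\<in>A. g x)) powr p"
    using insert by (intro powr_add_le_powr_add) (auto intro: sum_nonneg)
  finally show ?case using insert by simp
qed

lemma embeds_power_sum_less:
  assumes "embeds L M" "1 \<le> p" "length L < length M" "\<forall>x\<in>set M. 0 < x"
  shows "power_sum p L < power_sum p M"
proof -
  obtain \<phi> where into: "\<forall>i<length L. \<phi> i < length M"
    and fits: "\<forall>j<length M. (\<Sum>i\<in>{i. i < length L \<and> \<phi> i = j}. L ! i) \<le> M ! j"
    using assms(1) unfolding embeds_def by blast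
  define bin where "bin j = {i. i \<in> {..<length L} \<and> \<phi> i = j}" for j
  have "\<not> {..<length M} \<subseteq> \<phi> ` {..<length L}"
    using card_mono[of "\<phi> ` {..<length L}" "{..<length M}"]
      card_image_le[of "{..<length L}" \<phi>] assms(3) by auto
  then obtain j0 where j0: "j0 < length M" "bin j0 = {}"
    unfolding bin_def by auto
  have bin_le: "(\<Sum>i\<in>bin j. real (L ! i) powr p) \<le> real (M ! j) powr p"
    if "j < length M" for j
  proof -
    have "(\<Sum>i\<in>bin j. real (L ! i) powr p) \<le> (\<Sum>i\<in>bin j. real (L ! i)) powr p"
      unfolding bin_def by (rule sum_powr_le_powr_sum) (use assms in auto)
    also have "\<dots> \<le> real (M ! j) powr p"
      using fits that assms(2) unfolding bin_def
      by (intro powr_mono2) (auto simp flip: of_nat_sum intro: sum_nonneg)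
    finally show ?thesis .
  qed
  have "power_sum p L = (\<Sum>i<length L. real (L ! i) powr p)"
    unfolding power_sum_def by (simp add: sum_list_sum_nth atLeast0LessThan)
  also have "\<dots> = (\<Sum>j<length M. \<Sum>i\<in>bin j. real (L ! i) powr p)"
    unfolding bin_def by (rule sum.group[symmetric]) (use into in auto)
  also have "\<dots> < (\<Sum>j<length M. real (M ! j) powr p)"
    using bin_le j0 assms(4) by (intro sum_strict_mono_ex1) (auto intro!: bexI[of _ j0])
  also have "\<dots> = power_sum p M"
    unfolding power_sum_def by (simp add: sum_list_sum_nth atLeast0LessThan)
  finally show ?thesis .
qed

lemma stably_embeds_power_sum_less:
  assumes "stably_embeds L M" "1 \<le> p" "length L < length M" "\<forall>x\<in>set M. 0 < x"
  shows "power_sum p L < power_sum p M"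
proof -
  obtain n where n: "is_partition n" "n \<noteq> []" "embeds (ptimes L n) (ptimes M n)"
    using assms(1) unfolding stably_embeds_def by blast
  have n_pos: "\<forall>x\<in>set n. 0 < x"
    using n(1) unfolding is_partition_def by blast
  have "power_sum p L * power_sum p n < power_sum p M * power_sum p n"
    unfolding power_sum_ptimes[symmetric]
    using n(2) assms(2-4) n_pos
    by (intro embeds_power_sum_less[OF n(3)] ptimes_pos) (auto simp: length_ptimes)
  then show ?thesis
    using power_sum_nonneg[of p n] by (auto simp: mult_less_cancel_right)
qed

lemma power_sum_example_gap:
  "power_sum p ([16] @ replicate 16 2 @ replicate 16 1) - power_sum p [8,8,8,8,4,4,4,4]
     = ((2 powr p)\<^sup>2 - 2 * 2 powr p - 4)\<^sup>2"
proof -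
  have pow2: "real (2 ^ k) powr p = (2 powr p) ^ k" for k
    by (simp add: powr_realpow[symmetric] powr_powr mult.commute)
  have "power_sum p [8,8,8,8,4,4,4,4] = 4 * (2 powr p)^3 + 4 * (2 powr p)\<^sup>2"
    using pow2[of 3] pow2[of 2] by (simp add: power_sum_def)
  moreover have "power_sum p ([16] @ replicate 16 2 @ replicate 16 1)
      = (2 powr p)^4 + 16 * 2 powr p + 16"
    using pow2[of 4] by (simp add: power_sum_def sum_list_replicate)
  ultimately show ?thesis
    by (simp add: power2_eq_square power3_eq_cube power4_eq_xxxx algebra_simps)
qed

lemma golden_exponent_gt_1: "1 < ln (1 + sqrt 5) / ln 2"
proof -
  have "1 < sqrt (5::real)" by simp
  then have "ln 2 < ln (1 + sqrt 5)" by (subst ln_less_cancel_iff) linarith+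
  then show ?thesis by simp
qed

lemma two_powr_golden_exponent: "2 powr (ln (1 + sqrt 5) / ln 2) = 1 + sqrt 5"
proof -
  have "0 < 1 + sqrt 5" by (metis add_pos_nonneg real_sqrt_ge_zero zero_le_numeral zero_less_one)
  then show ?thesis by (simp add: powr_def)
qed

theorem mainTheorem7:
  fixes lam mu :: "nat list"
  assumes "lam = [8,8,8,8,4,4,4,4]"
    and "mu = [16] @ replicate 16 2 @ replicate 16 1"
  shows "(\<forall>p::real. 1 \<le> p \<longrightarrow> pnorm p lam \<le> pnorm p mu)
       \<and> infnorm lam \<le> infnorm mu
       \<and> ln (1 + sqrt 5) / ln 2 > 1
       \<and> pnorm (ln (1 + sqrt 5) / ln 2) lam = pnorm (ln (1 + sqrt 5) / ln 2) mu
       \<and> \<not> stably_embeds lam mu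
       \<and> \<not> S_le lam mu"
proof -
  define p0 where "p0 = ln (1 + sqrt 5) / ln 2"
  have gap: "power_sum p mu - power_sum p lam = ((2 powr p)\<^sup>2 - 2 * 2 powr p - 4)\<^sup>2" for p
    unfolding assms by (rule power_sum_example_gap)
  have "power_sum p lam \<le> power_sum p mu" for p
    using gap[of p] zero_le_power2 by (metis diff_ge_0_iff_ge)
  then have norm_le: "pnorm p lam \<le> pnorm p mu" if "1 \<le> p" for p
    using that power_sum_nonneg by (simp add: pnorm_eq_power_sum_powr powr_mono2)
  have "(1 + sqrt 5)\<^sup>2 - 2 * (1 + sqrt 5) - 4 = (0::real)"
    by (simp add: power2_eq_square algebra_simps)
  then have equal_p0: "power_sum p0 lam = power_sum p0 mu"
    using gap[of p0] unfolding p0_def two_powr_golden_exponent by simp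
  have "\<not> stably_embeds lam mu"
    using stably_embeds_power_sum_less[of lam mu p0] equal_p0 golden_exponent_gt_1
    unfolding p0_def assms by auto
  moreover have "\<not> S_le lam mu"
    unfolding S_le_def assms by (intro notI) (drule spec[of _ 4], simp)
  ultimately show ?thesis
    using norm_le equal_p0 golden_exponent_gt_1
    unfolding assms(1,2) infnorm_def p0_def pnorm_eq_power_sum_powr by auto
qed

end
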